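(* Let $\lambda\in[0,\frac{\pi}{2})$ and let $(|B(\lambda)\rangle,\mathcal{M})$, $\mathcal{M}=(M_1,M_2,M_3)$, be a maximally impossible quantum scenario. Then $|M_1|=|M_2|$.
   Context: For $\varphi\in\mathbb{R}$, $E_\varphi=\cos\varphi X+\sin\varphi Y$ is the equatorial measurement, with $+1$ eigenvector $|\varphi\rangle=\frac{1}{\sqrt2}(|0\rangle+e^{i\varphi}|1\rangle)$ and $-1$ eigenvector $|\varphi+\pi\rangle$; outcomes $+1,-1$ relabelled $0,1$; measurements identified with angles. A measurement scenario $\mathcal{M}=(M_1,M_2,M_3)$ consists of finite nonempty sets $M_i\subseteq[0,\pi)$ of angles for qubit $i$. For a three-qubit state $|\psi\rangle$, the event $(A,B,C)\to(a,b,c)$ with $(A,B,C)\in M_1\times M_2\times M_3$ is impossible if $(\langle A+a\pi|\otimes\langle B+b\pi|\otimes\langle C+c\pi|)|\psi\rangle=0$. For $\lambda\in[0,\frac{\pi}{2})$, $|v_\lambda\rangle=\cos\frac{\lambda}{2}|0\rangle+\sin\frac{\lambda}{2}|1\rangle$, $|w_\lambda\rangle=\sin\frac{\lambda}{2}|0\rangle+\cos\frac{\lambda}{2}|1\rangle$, and the interpolant state is $|B(\lambda)\rangle=\frac{1}{\sqrt2}(|00\rangle|v_\lambda\rangle+|11\rangle|w_\lambda\rangle)$. The quantum scenario $(|B(\lambda)\rangle,\mathcal{M})$ is maximally impossible if for every $C\in M_3$ and every $z\in\{0,1\}$: for every $A\in M_1$ there exist $B\in M_2$ and $a,b\in\{0,1\}$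 with $(A,B,C)\to(a,b,z)$ impossible, and for every $B\in M_2$ there exist $A\in M_1$ and $a,b\in\{0,1\}$ with $(A,B,C)\to(a,b,z)$ impossible. *)

theory Defs
  imports Complex_Main
begin

text \<open>Computational basis coefficient of the equatorial ket
  |phi> = (|0> + e^{i phi}|1>)/sqrt 2, for basis index x in {0,1}.\<close>
definition eq_ket :: "real \<Rightarrow> nat \<Rightarrow> complex" where
  "eq_ket \<phi> x = (if x = 0 then 1 else cis \<phi>) / complex_of_real (sqrt 2)"

text \<open>Three-qubit states as coefficient functions on basis indices in {0,1}.\<close>
type_synonym state3 = "nat \<Rightarrow> nat \<Rightarrow> nat \<Rightarrow> complex"

text \<open>(<A + a pi| (x) <B + b pi| (x) <C + c pi|) |psi>\<close>
definition amp :: "state3 \<Rightarrow> real \<Rightarrow> real \<Rightarrow> real \<Rightarrow> nat \<Rightarrow> nat \<Rightarrow> nat \<Rightarrow> complex" where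
  "amp \<psi> A B C a b c =
     (\<Sum>x\<in>{0,1}. \<Sum>y\<in>{0,1}. \<Sum>z\<in>{0,1}.
        cnj (eq_ket (A + real a * pi) x) * cnj (eq_ket (B + real b * pi) y) *
        cnj (eq_ket (C + real c * pi) z) * \<psi> x y z)"

definition impossible :: "state3 \<Rightarrow> real \<Rightarrow> real \<Rightarrow> real \<Rightarrow> nat \<Rightarrow> nat \<Rightarrow> nat \<Rightarrow> bool" where
  "impossible \<psi> A B C a b c \<longleftrightarrow> amp \<psi> A B C a b c = 0"

definition v_vec :: "real \<Rightarrow> nat \<Rightarrow> complex" where
  "v_vec l z = (if z = 0 then complex_of_real (cos (l/2)) else complex_of_real (sin (l/2)))"

definition w_vec :: "real \<Rightarrow> nat \<Rightarrow> complex" where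
  "w_vec l z = (if z = 0 then complex_of_real (sin (l/2)) else complex_of_real (cos (l/2)))"

definition B_state :: "real \<Rightarrow> state3" where
  "B_state l x y z =
     ((if x = 0 \<and> y = 0 then v_vec l z else 0) +
      (if x = 1 \<and> y = 1 then w_vec l z else 0)) / complex_of_real (sqrt 2)"

definition meas_scenario :: "real set \<Rightarrow> real set \<Rightarrow> real set \<Rightarrow> bool" where
  "meas_scenario M1 M2 M3 \<longleftrightarrow>
     (\<forall>M\<in>{M1, M2, M3}. finite M \<and> M \<noteq> {} \<and> M \<subseteq> {0..<pi})"

definition maximally_impossible :: "state3 \<Rightarrow> real set \<Rightarrow> real set \<Rightarrow> real set \<Rightarrow> bool" where
  "maximally_impossible \<psi> M1 M2 M3 \<longleftrightarrow>
     (\<forall>C\<in>M3. \<forall>z\<in>{0,1::nat}.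
        (\<forall>A\<in>M1. \<exists>B\<in>M2. \<exists>a\<in>{0,1}. \<exists>b\<in>{0,1}. impossible \<psi> A B C a b z) \<and>
        (\<forall>B\<in>M2. \<exists>A\<in>M1. \<exists>a\<in>{0,1}. \<exists>b\<in>{0,1}. impossible \<psi> A B C a b z))"

end

theory Submission
  imports Defs "HOL-Library.Real_Mod"
begin

text \<open>Outcome \<open>z\<close> of \<open>C\<close> projects the third qubit of \<open>|B(\<lambda>)\<rangle>\<close> onto a combination
  \<open>p |00\<rangle> + q |11\<rangle>\<close> with \<open>q \<noteq> 0\<close> (this is where \<open>\<lambda> < \<pi>/2\<close> enters), and the event
  \<open>(A, B) \<rightarrow> (a, b)\<close> on the first two qubits annihilates it exactly when the phase
  \<open>A + a\<pi> + B + b\<pi>\<close> takes one prescribed value modulo \<open>2\<pi>\<close>. Hence all impossible events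
  sharing \<open>(C, z)\<close> have the same \<open>A + B\<close> modulo \<open>\<pi>\<close>, so for angles in \<open>[0, \<pi>)\<close> the
  angle \<open>A\<close> determines \<open>B\<close> and vice versa. Maximal impossibility, already for a single
  \<open>C\<close> and outcome \<open>z = 0\<close>, says that this partial bijection between \<open>M\<^sub>1\<close> and \<open>M\<^sub>2\<close>
  is total on both sides.\<close>

lemma card_eq_if_rel_set_bi_unique_on:
  assumes "rel_set R X Y"
    and "\<And>x x' y y'. \<lbrakk>x \<in> X; x' \<in> X; y \<in> Y; y' \<in> Y; R x y; R x' y'\<rbrakk> \<Longrightarrow> x = x' \<longleftrightarrow> y = y'"
  shows "card X = card Y"
proof -
  define R' where "R' x y \<longleftrightarrow> x \<in> X \<and> y \<in> Y \<and> R x y" for x y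
  have "bi_unique R'"
    using assms(2) unfolding R'_def bi_unique_def by blast
  moreover have "rel_set R' X Y"
    using assms(1) unfolding R'_def rel_set_def by blast
  ultimately show ?thesis
    using card_transfer by (blast dest: rel_funD)
qed

lemma rcong_half_modulus: "[x = y] (rmod (2 * m)) \<Longrightarrow> [x = y] (rmod m)"
  unfolding rcong_altdef by (metis mult.assoc mult.commute of_int_mult of_int_numeral)

lemma rcong_add_nat_multiple: "[x + real k * m = x] (rmod m)"
  unfolding rcong_altdef by (intro exI[of _ "- int k"]) simp

lemma amp_B_state:
  "amp (B_state l) A B C a b c =
     (complex_of_real (cos (l/2)) + complex_of_real (sin (l/2)) * cis (-(C + real c * pi))
      + cis (-(A + real a * pi + (B + real b * pi))) *
        (complex_of_real (sin (l/2)) + complex_of_real (cos (l/2)) * cis (-(C + real c * pi)))) / 4"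
proof -
  have sqrt2_pow4: "complex_of_real (sqrt 2) * (complex_of_real (sqrt 2) *
      (complex_of_real (sqrt 2) * complex_of_real (sqrt 2))) = 4"
    by (simp flip: of_real_mult)
  have "cis (-(A + real a * pi + (B + real b * pi))) = cis (-(A + real a * pi)) * cis (-(B + real b * pi))"
    by (simp add: cis_mult)
  then show ?thesis
    unfolding amp_def
    by (simp add: B_state_def eq_ket_def v_vec_def w_vec_def sqrt2_pow4 cis_cnj
        add_divide_distrib algebra_simps)
qed

lemma sin_add_cos_cis_nonzero:
  assumes "cos l \<noteq> 0"
  shows "complex_of_real (sin (l/2)) + complex_of_real (cos (l/2)) * cis t \<noteq> 0"
proof
  assume "complex_of_real (sin (l/2)) + complex_of_real (cos (l/2)) * cis t = 0"
  then have "norm (complex_of_real (sin (l/2))) = norm (complex_of_real (cos (l/2)) * cis t)"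
    by (metis add.inverse_unique norm_minus_cancel)
  then have "(sin (l/2))\<^sup>2 = (cos (l/2))\<^sup>2"
    by (metis norm_cis norm_mult norm_of_real mult_1_right power2_abs)
  then have "cos l = 0"
    using cos_double[of "l/2"] by simp
  with assms show False ..
qed

lemma impossible_B_state_angle_sum_rcong:
  assumes "cos l \<noteq> 0"
    and "impossible (B_state l) A B C a b c" "impossible (B_state l) A' B' C a' b' c"
  shows "[A + B = A' + B'] (rmod pi)"
proof -
  define p where "p = complex_of_real (cos (l/2)) + complex_of_real (sin (l/2)) * cis (-(C + real c * pi))"
  define q where "q = complex_of_real (sin (l/2)) + complex_of_real (cos (l/2)) * cis (-(C + real c * pi))"
  have "q \<noteq> 0"
    unfolding q_def using sin_add_cos_cis_nonzero[OF assms(1)] .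
  then have phase: "cis (-(A\<^sub>0 + real a\<^sub>0 * pi + (B\<^sub>0 + real b\<^sub>0 * pi))) = - p / q"
    if "impossible (B_state l) A\<^sub>0 B\<^sub>0 C a\<^sub>0 b\<^sub>0 c" for A\<^sub>0 B\<^sub>0 a\<^sub>0 b\<^sub>0
    using that unfolding impossible_def amp_B_state p_def [symmetric] q_def [symmetric]
    by (simp add: field_simps add_eq_0_iff)
  have "[A + real a * pi + (B + real b * pi) = A' + real a' * pi + (B' + real b' * pi)] (rmod (2 * pi))"
    using phase[OF assms(2)] phase[OF assms(3)] by (metis cis_eq_iff rcong_uminus_uminus_iff)
  then have "[A + real a * pi + (B + real b * pi) = A' + real a' * pi + (B' + real b' * pi)] (rmod pi)"
    by (rule rcong_half_modulus)
  moreover have "A + real a * pi + (B + real b * pi) = A + B + real (a + b) * pi"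
    for A B :: real and a b :: nat
    by (simp add: algebra_simps)
  ultimately show ?thesis
    by (metis rcong_add_nat_multiple rcong_sym rcong_trans)
qed

lemma impossible_B_state_left_eq_iff_right_eq:
  assumes "cos l \<noteq> 0"
    and "A \<in> {0..<pi}" "A' \<in> {0..<pi}" "B \<in> {0..<pi}" "B' \<in> {0..<pi}"
    and "impossible (B_state l) A B C a b c" "impossible (B_state l) A' B' C a' b' c"
  shows "A = A' \<longleftrightarrow> B = B'"
proof -
  have sum: "[A + B = A' + B'] (rmod pi)"
    using impossible_B_state_angle_sum_rcong[OF assms(1,6,7)] .
  have "\<bar>A - A'\<bar> < \<bar>pi\<bar>" "\<bar>B - B'\<bar> < \<bar>pi\<bar>"
    using assms(2-5) by auto
  with sum show ?thesis
    by (metis rcong_imp_eq rcong_add_left_cancel rcong_add_right_cancel)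
qed

theorem lemma11:
  fixes l :: real and M1 M2 M3 :: "real set"
  assumes "0 \<le> l" and "l < pi / 2"
    and "meas_scenario M1 M2 M3"
    and "maximally_impossible (B_state l) M1 M2 M3"
  shows "card M1 = card M2"
proof -
  have "cos l \<noteq> 0"
    using assms(1,2) cos_gt_zero_pi[of l] by auto
  from assms(3) obtain C where "C \<in> M3" and angles: "M1 \<subseteq> {0..<pi}" "M2 \<subseteq> {0..<pi}"
    unfolding meas_scenario_def by auto
  define R where "R A B \<longleftrightarrow> (\<exists>a b. impossible (B_state l) A B C a b 0)" for A B
  have "rel_set R M1 M2"
    using assms(4) \<open>C \<in> M3\<close> unfolding maximally_impossible_def rel_set_def R_def by blast
  then show ?thesis
  proof (rule card_eq_if_rel_set_bi_unique_on)
    fix A A' B B'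
    assume "A \<in> M1" "A' \<in> M1" "B \<in> M2" "B' \<in> M2" "R A B" "R A' B'"
    with angles \<open>cos l \<noteq> 0\<close> show "A = A' \<longleftrightarrow> B = B'"
      unfolding R_def by (metis impossible_B_state_left_eq_iff_right_eq subsetD)
  qed
qed

end
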